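(* Let $\alpha,\beta,\gamma,x\in\mathbb{N}_0$ with $(\alpha,\beta,\gamma,x)\neq(0,0,0,0)$, let $\lambda$ be a nonnegative integer and $n$ a nonnegative integer. Then $$A^{\lambda,x}_n(\alpha,\beta,\gamma)=\sum_{k=0}^{n}\binom{k+\lambda-1}{k}\sum_{i=0}^{n}\binom{n}{i}x^k(-1)^{k+i}\beta^k k!\,S(i,k,\alpha,-\beta,0)\,(\gamma|-\alpha)_{n-i}.$$
   Context: For a number $t$ and $\alpha$, the generalised factorial is $(t|\alpha)_n=\prod_{j=0}^{n-1}(t-j\alpha)$ for $n\ge 1$ and $(t|\alpha)_0=1$. For parameters $\alpha,\beta,\gamma$, the generalised Stirling numbers $S(n,k,\alpha,\beta,\gamma)$ ($0\le k\le n$) are defined by the polynomial identity $(t|\alpha)_n=\sum_{k=0}^{n}S(n,k,\alpha,\beta,\gamma)\,(t-\gamma|\beta)_k$ in the variable $t$, and $S(i,k,\alpha,\beta,\gamma)=0$ for $k>i$. For a nonnegative integer $\lambda$ put $\binom{k+\lambda-1}{k}=\lambda(\lambda+1)\cdots(\lambda+k-1)/k!$ (equal to $1$ for $k=0$). Define $$A^{\lambda,x}_n(\alpha,\beta,\gamma)=\sum_{k=0}^{n}\binom{k+\lambda-1}{k}(-1)^{n+k}\beta^k k!\,S(n,k,\alpha,-\beta,-\gamma)\,x^k .$$ *)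

theory Defs
  imports Complex_Main
begin

definition gfact :: "real \<Rightarrow> real \<Rightarrow> nat \<Rightarrow> real" where
  "gfact t a n = (\<Prod>j<n. (t - of_nat j * a))"

definition gstirling :: "nat \<Rightarrow> nat \<Rightarrow> real \<Rightarrow> real \<Rightarrow> real \<Rightarrow> real" where
  "gstirling n k a b g =
     (THE c. (\<forall>t. gfact t a n = (\<Sum>j\<le>n. c j * gfact (t - g) b j)) \<and> (\<forall>j>n. c j = 0)) k"

text \<open>binom(k+lambda-1, k) = lambda(lambda+1)...(lambda+k-1)/k!.\<close>
definition binomL :: "nat \<Rightarrow> nat \<Rightarrow> real" where
  "binomL lam k = pochhammer (real lam) k / fact k"

definition Apoly :: "nat \<Rightarrow> real \<Rightarrow> nat \<Rightarrow> real \<Rightarrow> real \<Rightarrow> real \<Rightarrow> real" where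
  "Apoly lam x n a b g =
     (\<Sum>k\<le>n. binomL lam k * (-1) ^ (n + k) * b ^ k * fact k * gstirling n k a (-b) (-g) * x ^ k)"

end

theory Submission
  imports Defs "HOL-Computational_Algebra.Polynomial"
begin

text \<open>The generalised factorials \<open>(t|b)\<^sub>j\<close>, \<open>j \<le> n\<close>, are monic polynomials in \<open>t\<close> of
  degree \<open>j\<close>, so they form a basis of the polynomials of degree at most \<open>n\<close>; hence the
  Stirling numbers \<open>S(n,k,a,b,g)\<close> exist and are unique. Writing \<open>t = (t + g) + (-g)\<close>, the
  binomial theorem for generalised factorials expands \<open>(t|a)\<^sub>n\<close> as
  \<open>\<Sum>\<^sub>i C(n,i) (t+g|a)\<^sub>i (-g|a)\<^sub>n\<^sub>-\<^sub>i\<close>, and expanding each \<open>(t+g|a)\<^sub>i\<close> in the basis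
  \<open>(t+g|b)\<^sub>k\<close> yields \<open>S(n,k,a,b,-g) = \<Sum>\<^sub>i C(n,i) S(i,k,a,b,0) (-g|a)\<^sub>n\<^sub>-\<^sub>i\<close> by uniqueness.
  The theorem follows from \<open>(-g|a)\<^sub>m = (-1)\<^sup>m (g|-a)\<^sub>m\<close> and collecting signs.\<close>

lemma gfact_Suc: "gfact t a (Suc n) = gfact t a n * (t - of_nat n * a)"
  by (simp add: gfact_def)

lemma gfact_uminus: "gfact (- t) a n = (-1) ^ n * gfact t (- a) n"
  by (induction n) (simp_all add: gfact_def algebra_simps)

lemma gfact_eq_pochhammer:
  assumes "a \<noteq> 0"
  shows "gfact t a n = (- a) ^ n * pochhammer (- t / a) n"
proof -
  have "(- a) ^ n * pochhammer (- t / a) n = (\<Prod>j<n. - a) * (\<Prod>j<n. - t / a + of_nat j)"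
    by (simp add: pochhammer_prod atLeast0LessThan)
  also have "\<dots> = gfact t a n"
    unfolding gfact_def prod.distrib[symmetric] using assms
    by (intro prod.cong) (auto simp: field_simps)
  finally show ?thesis by simp
qed

lemma gfact_add:
  "gfact (s + t) a n = (\<Sum>i\<le>n. of_nat (n choose i) * gfact s a i * gfact t a (n - i))"
proof (cases "a = 0")
  case True
  then show ?thesis by (simp add: gfact_def binomial_ring mult_ac)
next
  case False
  have "gfact (s + t) a n = (- a) ^ n * pochhammer (- s / a + - t / a) n"
    using False by (simp add: gfact_eq_pochhammer diff_divide_distrib)
  also have "\<dots> = (\<Sum>i\<le>n. of_nat (n choose i)
      * ((- a) ^ i * pochhammer (- s / a) i) * ((- a) ^ (n - i) * pochhammer (- t / a) (n - i)))"
    unfolding pochhammer_binomial_sum sum_distrib_left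
    by (intro sum.cong refl) (simp add: power_add[symmetric] mult_ac)
  finally show ?thesis
    using False by (simp add: gfact_eq_pochhammer)
qed

definition gfact_poly :: "real \<Rightarrow> nat \<Rightarrow> real poly" where
  "gfact_poly a n = (\<Prod>j<n. [:- (of_nat j * a), 1:])"

lemma poly_gfact_poly: "poly (gfact_poly a n) t = gfact t a n"
  by (simp add: gfact_poly_def gfact_def poly_prod)

lemma degree_gfact_poly: "degree (gfact_poly a n) = n"
  unfolding gfact_poly_def by (subst degree_prod_eq_sum_degree) auto

lemma lead_coeff_gfact_poly: "lead_coeff (gfact_poly a n) = 1"
  unfolding gfact_poly_def by (subst lead_coeff_prod) auto

lemma gfact_lincomb_eq_0:
  assumes "\<And>t. (\<Sum>j\<le>n. c j * gfact t b j) = 0"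
  shows "\<forall>j\<le>n. c j = 0"
  using assms
proof (induction n)
  case 0
  then show ?case by (simp add: gfact_def)
next
  case (Suc n)
  let ?Q = "\<Sum>j\<le>Suc n. smult (c j) (gfact_poly b j)"
  have "poly ?Q = poly 0"
    using Suc.prems by (simp add: poly_sum poly_gfact_poly fun_eq_iff)
  then have "?Q = 0"
    by (simp add: poly_eq_poly_eq_iff)
  have "c (Suc n) = (\<Sum>j\<le>Suc n. c j * coeff (gfact_poly b j) (Suc n))"
    using lead_coeff_gfact_poly[of b "Suc n"]
    by (simp add: degree_gfact_poly coeff_eq_0)
  also have "\<dots> = coeff ?Q (Suc n)"
    by (simp add: coeff_sum)
  also have "\<dots> = 0"
    using \<open>?Q = 0\<close> by simp
  finally have "c (Suc n) = 0" .
  moreover from this Suc.prems have "\<forall>j\<le>n. c j = 0"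
    by (intro Suc.IH) simp
  ultimately show ?case
    by (simp add: le_Suc_eq)
qed

lemma gfact_lincomb_unique:
  assumes "\<And>t. (\<Sum>j\<le>n. c j * gfact (t - g) b j) = (\<Sum>j\<le>n. d j * gfact (t - g) b j)"
  shows "\<forall>j\<le>n. c j = d j"
proof -
  have "(\<Sum>j\<le>n. (c j - d j) * gfact s b j) = 0" for s
    using assms[of "s + g"] by (simp add: algebra_simps sum_subtractf)
  then have "\<forall>j\<le>n. c j - d j = 0"
    by (rule gfact_lincomb_eq_0)
  then show ?thesis by simp
qed

text \<open>Multiplying by \<open>t - n a = (t - g - j b) + (g + j b - n a)\<close> raises \<open>(t - g|b)\<^sub>j\<close> to
  \<open>(t - g|b)\<^sub>j\<^sub>+\<^sub>1\<close> plus a multiple of itself.\<close>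
lemma gfact_expansion_exists:
  "\<exists>c. (\<forall>t. gfact t a n = (\<Sum>j\<le>n. c j * gfact (t - g) b j)) \<and> (\<forall>j>n. c j = 0)"
proof (induction n)
  case 0
  show ?case
    by (rule exI[of _ "\<lambda>j. if j = 0 then 1 else 0"]) (simp add: gfact_def)
next
  case (Suc n)
  then obtain c where c: "\<And>t. gfact t a n = (\<Sum>j\<le>n. c j * gfact (t - g) b j)"
    and c_zero: "\<And>j. j > n \<Longrightarrow> c j = 0"
    by blast
  define c' where
    "c' j = (if j = 0 then 0 else c (j - 1)) + (g + of_nat j * b - of_nat n * a) * c j" for j
  have "gfact t a (Suc n) = (\<Sum>j\<le>Suc n. c' j * gfact (t - g) b j)" for t
  proof -
    have "gfact t a (Suc n) = (\<Sum>j\<le>n. c j * gfact (t - g) b (Suc j))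
        + (\<Sum>j\<le>n. (g + of_nat j * b - of_nat n * a) * c j * gfact (t - g) b j)"
      unfolding gfact_Suc c sum_distrib_right sum.distrib[symmetric]
      by (intro sum.cong) (simp_all add: gfact_Suc algebra_simps)
    also have "(\<Sum>j\<le>n. c j * gfact (t - g) b (Suc j))
        = (\<Sum>j\<le>Suc n. (if j = 0 then 0 else c (j - 1)) * gfact (t - g) b j)"
      by (subst sum.atMost_Suc_shift) simp
    also have "(\<Sum>j\<le>n. (g + of_nat j * b - of_nat n * a) * c j * gfact (t - g) b j)
        = (\<Sum>j\<le>Suc n. (g + of_nat j * b - of_nat n * a) * c j * gfact (t - g) b j)"
      using c_zero by simp
    also have "(\<Sum>j\<le>Suc n. (if j = 0 then 0 else c (j - 1)) * gfact (t - g) b j)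
        + (\<Sum>j\<le>Suc n. (g + of_nat j * b - of_nat n * a) * c j * gfact (t - g) b j)
        = (\<Sum>j\<le>Suc n. c' j * gfact (t - g) b j)"
      unfolding c'_def sum.distrib[symmetric] distrib_right by (rule sum.cong) simp_all
    finally show ?thesis .
  qed
  moreover have "\<forall>j>Suc n. c' j = 0"
    using c_zero by (simp add: c'_def)
  ultimately show ?case by blast
qed

lemma
  shows gstirling_expansion: "gfact t a n = (\<Sum>j\<le>n. gstirling n j a b g * gfact (t - g) b j)"
    and gstirling_eq_0: "j > n \<Longrightarrow> gstirling n j a b g = 0"
proof -
  let ?P = "\<lambda>c. (\<forall>t. gfact t a n = (\<Sum>j\<le>n. c j * gfact (t - g) b j)) \<and> (\<forall>j>n. c j = 0)"
  have "\<exists>!c. ?P c"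
  proof (rule ex_ex1I)
    show "\<exists>c. ?P c" by (rule gfact_expansion_exists)
  next
    fix c d
    assume c: "?P c" and d: "?P d"
    have agree: "\<forall>j\<le>n. c j = d j"
    proof (rule gfact_lincomb_unique)
      fix t
      show "(\<Sum>j\<le>n. c j * gfact (t - g) b j) = (\<Sum>j\<le>n. d j * gfact (t - g) b j)"
        using c d by (metis (no_types))
    qed
    show "c = d"
    proof
      fix j
      show "c j = d j"
        using agree c d by (cases "j \<le> n") auto
    qed
  qed
  then have "?P (\<lambda>j. gstirling n j a b g)"
    unfolding gstirling_def by (rule theI')
  then show "gfact t a n = (\<Sum>j\<le>n. gstirling n j a b g * gfact (t - g) b j)"
    and "j > n \<Longrightarrow> gstirling n j a b g = 0"
    by blast+
qed

lemma gstirling_eqI: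
  assumes "\<And>t. gfact t a n = (\<Sum>j\<le>n. c j * gfact (t - g) b j)" and "k \<le> n"
  shows "gstirling n k a b g = c k"
proof -
  have "\<forall>j\<le>n. gstirling n j a b g = c j"
  proof (rule gfact_lincomb_unique)
    fix t
    show "(\<Sum>j\<le>n. gstirling n j a b g * gfact (t - g) b j) = (\<Sum>j\<le>n. c j * gfact (t - g) b j)"
      using gstirling_expansion[of t a n b g] assms(1)[of t] by linarith
  qed
  with assms(2) show ?thesis by blast
qed

lemma gstirling_expansion_atMost:
  assumes "i \<le> n"
  shows "gfact t a i = (\<Sum>j\<le>n. gstirling i j a b g * gfact (t - g) b j)"
  unfolding gstirling_expansion[of t a i b g] using assms gstirling_eq_0
  by (intro sum.mono_neutral_left) auto

lemma gstirling_shift: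
  assumes "k \<le> n"
  shows "gstirling n k a b (- g) =
    (\<Sum>i\<le>n. of_nat (n choose i) * gstirling i k a b 0 * gfact (- g) a (n - i))"
proof (rule gstirling_eqI[OF _ assms])
  fix t
  have expand: "gfact (t + g) a i = (\<Sum>j\<le>n. gstirling i j a b 0 * gfact (t + g) b j)"
    if "i \<le> n" for i
    using gstirling_expansion_atMost[OF that, of "t + g" a b 0] by simp
  have "gfact t a n = gfact ((t + g) + - g) a n" by simp
  also have "\<dots> = (\<Sum>i\<le>n. of_nat (n choose i) * gfact (t + g) a i * gfact (- g) a (n - i))"
    by (rule gfact_add)
  also have "\<dots> = (\<Sum>i\<le>n. \<Sum>j\<le>n. of_nat (n choose i) * gstirling i j a b 0
      * gfact (- g) a (n - i) * gfact (t + g) b j)"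
    by (intro sum.cong refl)
       (simp add: expand sum_distrib_left sum_distrib_right mult_ac)
  also have "\<dots> = (\<Sum>j\<le>n. (\<Sum>i\<le>n. of_nat (n choose i) * gstirling i j a b 0
      * gfact (- g) a (n - i)) * gfact (t - - g) b j)"
    by (subst sum.swap) (simp add: sum_distrib_right)
  finally show "gfact t a n = \<dots>" .
qed

lemma minus_one_power_add_diff:
  assumes "i \<le> n"
  shows "(-1 :: 'a :: ring_1) ^ (n + k) * (-1) ^ (n - i) = (-1) ^ (k + i)"
proof -
  have "n + k + (n - i) = (k + i) + 2 * (n - i)"
    using assms by simp
  then have "(-1 :: 'a) ^ (n + k) * (-1) ^ (n - i) = (-1) ^ (k + i) * ((-1) ^ 2) ^ (n - i)"
    by (simp only: power_add[symmetric] power_mult[symmetric])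
  then show ?thesis by simp
qed

lemma gstirling_shift_signed:
  assumes "k \<le> n"
  shows "(-1) ^ (n + k) * gstirling n k a b (- g) =
    (\<Sum>i\<le>n. of_nat (n choose i) * (-1) ^ (k + i) * gstirling i k a b 0 * gfact g (- a) (n - i))"
  unfolding gstirling_shift[OF assms] gfact_uminus sum_distrib_left
  by (intro sum.cong refl) (simp add: minus_one_power_add_diff[symmetric] mult_ac)

text \<open>The identity holds for all parameters.\<close>
theorem theorem7:
  fixes \<alpha> \<beta> \<gamma> x lam n :: nat
  assumes "(\<alpha>, \<beta>, \<gamma>, x) \<noteq> (0, 0, 0, 0)"
  shows "Apoly lam (real x) n (real \<alpha>) (real \<beta>) (real \<gamma>) =
    (\<Sum>k\<le>n. binomL lam k *
       (\<Sum>i\<le>n. real (n choose i) * real x ^ k * (-1) ^ (k + i) * real \<beta> ^ k * fact k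
          * gstirling i k (real \<alpha>) (- real \<beta>) 0 * gfact (real \<gamma>) (- real \<alpha>) (n - i)))"
  unfolding Apoly_def
proof (intro sum.cong refl)
  fix k
  assume "k \<in> {..n}"
  let ?c = "real \<beta> ^ k * fact k * real x ^ k"
  have "binomL lam k * (-1) ^ (n + k) * real \<beta> ^ k * fact k
      * gstirling n k (real \<alpha>) (- real \<beta>) (- real \<gamma>) * real x ^ k
    = binomL lam k * (?c * ((-1) ^ (n + k) * gstirling n k (real \<alpha>) (- real \<beta>) (- real \<gamma>)))"
    by (simp only: ac_simps)
  also have "\<dots> = binomL lam k * (?c * (\<Sum>i\<le>n. real (n choose i) * (-1) ^ (k + i)
      * gstirling i k (real \<alpha>) (- real \<beta>) 0 * gfact (real \<gamma>) (- real \<alpha>) (n - i)))"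
    using \<open>k \<in> {..n}\<close> by (simp add: gstirling_shift_signed)
  also have "\<dots> = binomL lam k *
       (\<Sum>i\<le>n. real (n choose i) * real x ^ k * (-1) ^ (k + i) * real \<beta> ^ k * fact k
          * gstirling i k (real \<alpha>) (- real \<beta>) 0 * gfact (real \<gamma>) (- real \<alpha>) (n - i))"
    by (simp add: sum_distrib_left ac_simps)
  finally show "binomL lam k * (-1) ^ (n + k) * real \<beta> ^ k * fact k
      * gstirling n k (real \<alpha>) (- real \<beta>) (- real \<gamma>) * real x ^ k = \<dots>" .
qed

end
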